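(* Let $G$ be a group acting on a set $X$, let $Y$ be a finite subset of $X$ and set \[\mu=\inf_{A\in\mathcal{P}_{\mathrm{fin}}(G)\setminus\{\emptyset\}}\frac{|A\cdot Y|}{|A|}.\] Then either $\mu=0$, or for every $\lambda\in[0,\mu]$ there exists a finite subgroup $H$ of $G$ containing $G_Y$ such that, writing $c_Y(A)=|A\cdot Y|-\lambda|A|$, \[c_Y(A)\geq c_Y(H)\geq|Y|-\lambda|H|\] for every nonempty finite subset $A$ of $G$.
   Context: $\mathcal{P}_{\mathrm{fin}}(G)$ is the set of finite subsets of $G$; $A\cdot Y=\{a\cdot y\mid a\in A,y\in Y\}$; $G_Y=\{g\in G\mid g\cdot Y=Y\}$ is the stabilizer of $Y$. *)

theory Defs
  imports Complex_Main "HOL-Algebra.Group_Action"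
begin

definition act_set :: "('a \<Rightarrow> 'b \<Rightarrow> 'b) \<Rightarrow> 'a set \<Rightarrow> 'b set \<Rightarrow> 'b set" where
  "act_set \<phi> A Y = {\<phi> a y | a y. a \<in> A \<and> y \<in> Y}"

definition set_stabilizer :: "('a, 'c) monoid_scheme \<Rightarrow> ('a \<Rightarrow> 'b \<Rightarrow> 'b) \<Rightarrow> 'b set \<Rightarrow> 'a set" where
  "set_stabilizer G \<phi> Y = {g \<in> carrier G. \<phi> g ` Y = Y}"

definition mu_ratio :: "('a, 'c) monoid_scheme \<Rightarrow> ('a \<Rightarrow> 'b \<Rightarrow> 'b) \<Rightarrow> 'b set \<Rightarrow> real" where
  "mu_ratio G \<phi> Y = (INF A \<in> {A. A \<subseteq> carrier G \<and> finite A \<and> A \<noteq> {}}.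
      real (card (act_set \<phi> A Y)) / real (card A))"

definition cY :: "('a \<Rightarrow> 'b \<Rightarrow> 'b) \<Rightarrow> 'b set \<Rightarrow> real \<Rightarrow> 'a set \<Rightarrow> real" where
  "cY \<phi> Y l A = real (card (act_set \<phi> A Y)) - l * real (card A)"

end

theory Submission
  imports Defs
begin

text \<open>
  The cost \<open>c\<^sub>\<lambda>(A) = |A\<cdot>Y| - \<lambda>|A|\<close> is submodular and invariant under left translation.
  For \<open>\<lambda> < \<mu>\<close> it is bounded below by \<open>(\<mu> - \<lambda>)|A|\<close>, so it has minimizers, and we take one of
  maximal size, translated to contain \<open>1\<close>. Submodularity forces it to absorb its translates
  \<open>gH\<close> (\<open>g \<in> H\<close>), so it is a subgroup; it absorbs \<open>Hs\<close> for \<open>s \<in> G\<^sub>Y\<close> because adding \<open>Hs\<close> leaves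
  \<open>H\<cdot>Y\<close> unchanged. The same argument makes these subgroups \<open>K(\<lambda>)\<close> increase with \<open>\<lambda>\<close>.

  For \<open>\<lambda> = \<mu>\<close> one passes to the limit along this chain. By orbit counting,
  \<open>c\<^sub>\<mu>(K) = |K| (\<Sum>\<^sub>y 1/(|K\<^sub>y| |Ky \<inter> Y|) - \<mu>)\<close>. As \<open>\<lambda> \<rightarrow> \<mu>\<close>, the terms whose stabilizers
  stop growing freeze and the others tend to \<open>0\<close>; since \<open>0 \<le> c\<^sub>\<mu>(K(\<lambda>)) \<le> |Y|\<close>, either the
  chain stabilizes or the frozen part cancels \<open>\<mu>\<close> exactly, and what remains is a sum of orbit
  sizes, nondecreasing in \<open>\<lambda>\<close>. Either way some \<open>K(\<lambda>\<^sub>1)\<close> satisfies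
  \<open>c\<^sub>\<mu>(K(\<lambda>\<^sub>1)) \<le> c\<^sub>\<lambda>(K(\<lambda>)) \<le> c\<^sub>\<lambda>(A)\<close> for all \<open>\<lambda>\<close> close to \<open>\<mu>\<close>, and \<open>\<lambda> \<rightarrow> \<mu>\<close> gives the claim.
\<close>

section \<open>The cost function\<close>

lemma act_set_eq_image: "act_set \<phi> A Y = (\<lambda>(a, y). \<phi> a y) ` (A \<times> Y)"
  unfolding act_set_def by auto

lemma act_set_Un: "act_set \<phi> (A \<union> B) Y = act_set \<phi> A Y \<union> act_set \<phi> B Y"
  unfolding act_set_def by blast

lemma act_set_Int_subset: "act_set \<phi> (A \<inter> B) Y \<subseteq> act_set \<phi> A Y \<inter> act_set \<phi> B Y"
  unfolding act_set_def by blast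

lemma finite_act_set: "finite A \<Longrightarrow> finite Y \<Longrightarrow> finite (act_set \<phi> A Y)"
  by (simp add: act_set_eq_image)

lemma card_act_set_le: "finite A \<Longrightarrow> finite Y \<Longrightarrow> card (act_set \<phi> A Y) \<le> card A * card Y"
  unfolding act_set_eq_image
  by (metis card_cartesian_product card_image_le finite_cartesian_product)

lemma cY_shift: "cY \<phi> Y l' A = cY \<phi> Y l A - (l' - l) * real (card A)"
  unfolding cY_def by (simp add: algebra_simps)

lemma cY_antimono: "l \<le> l' \<Longrightarrow> cY \<phi> Y l' A \<le> cY \<phi> Y l A"
  unfolding cY_def by (simp add: mult_right_mono)

lemma cY_Un_Int_le:
  assumes "finite A" "finite B" "finite Y"
  shows "cY \<phi> Y l (A \<union> B) + cY \<phi> Y l (A \<inter> B) \<le> cY \<phi> Y l A + cY \<phi> Y l B"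
proof -
  let ?AY = "act_set \<phi> A Y" and ?BY = "act_set \<phi> B Y"
  have fin: "finite ?AY" "finite ?BY"
    using assms finite_act_set by auto
  have "card (act_set \<phi> (A \<inter> B) Y) \<le> card (?AY \<inter> ?BY)"
    using fin by (intro card_mono act_set_Int_subset) auto
  then have "card (act_set \<phi> (A \<union> B) Y) + card (act_set \<phi> (A \<inter> B) Y) \<le> card ?AY + card ?BY"
    using card_Un_Int[OF fin] by (simp add: act_set_Un)
  then have images: "real (card (act_set \<phi> (A \<union> B) Y)) + real (card (act_set \<phi> (A \<inter> B) Y))
      \<le> real (card ?AY) + real (card ?BY)"
    by (metis of_nat_add of_nat_le_iff)
  have "real (card (A \<union> B)) + real (card (A \<inter> B)) = real (card A) + real (card B)"
    using card_Un_Int[OF assms(1,2)] by (metis of_nat_add)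
  then have "l * real (card (A \<union> B)) + l * real (card (A \<inter> B)) = l * real (card A) + l * real (card B)"
    by (metis distrib_left)
  with images show ?thesis
    unfolding cY_def by linarith
qed

section \<open>Monotone functions near a left limit\<close>

lemma eventually_at_left_imp_interval:
  fixes a b :: real
  assumes "eventually P (at_left b)" "a < b"
  obtains l where "a \<le> l" "l < b" "\<And>x. l \<le> x \<Longrightarrow> x < b \<Longrightarrow> P x"
proof -
  obtain c where "c < b" and P: "\<And>x. c < x \<Longrightarrow> x < b \<Longrightarrow> P x"
    using assms(1) unfolding eventually_at_left_field by blast
  then show thesis
    using assms(2) by (intro that[of "max a ((b + c) / 2)"]) auto
qed

lemma mono_nat_eventually_const_or_at_top:
  fixes f :: "real \<Rightarrow> nat" and a b :: real
  assumes "a < b" and mono: "\<And>x y. a \<le> x \<Longrightarrow> x \<le> y \<Longrightarrow> y < b \<Longrightarrow> f x \<le> f y"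
  shows "(\<exists>v. eventually (\<lambda>x. f x = v) (at_left b)) \<or> filterlim f at_top (at_left b)"
proof (cases "\<exists>N. \<forall>x. a \<le> x \<and> x < b \<longrightarrow> f x < N")
  case True
  then obtain N where "\<forall>x. a \<le> x \<and> x < b \<longrightarrow> f x < N"
    by blast
  then obtain x0 where x0: "a \<le> x0" "x0 < b" and max: "\<And>x. a \<le> x \<Longrightarrow> x < b \<Longrightarrow> f x \<le> f x0"
    using ex_has_greatest_nat[of "\<lambda>x. a \<le> x \<and> x < b" a f N] assms(1) by auto
  have "eventually (\<lambda>x. f x = f x0) (at_left b)"
    using eventually_at_left_real[OF x0(2)]
    by eventually_elim (rule antisym[OF max mono], use x0 in auto)
  then show ?thesis by blast
next
  case False
  have "eventually (\<lambda>x. N \<le> f x) (at_left b)" for N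
  proof -
    obtain x0 where x0: "a \<le> x0" "x0 < b" "N \<le> f x0"
      using False by (meson not_less)
    show ?thesis
      using eventually_at_left_real[OF x0(2)]
      by eventually_elim (rule order_trans[OF x0(3) mono], use x0 in auto)
  qed
  then show ?thesis
    unfolding filterlim_at_top by blast
qed

lemma bounded_product_at_top_imp_zero:
  fixes f g :: "'a \<Rightarrow> real"
  assumes "filterlim f at_top F" "(g \<longlongrightarrow> d) F" "F \<noteq> bot"
    and bounded: "eventually (\<lambda>x. 0 \<le> f x * g x \<and> f x * g x \<le> B) F"
  shows "d = 0"
proof (rule ccontr)
  assume "d \<noteq> 0"
  then consider "0 < d" | "d < 0" by linarith
  then have "eventually (\<lambda>x. g x * f x < 0 \<or> B < g x * f x) F"
  proof cases
    case 1
    have "filterlim (\<lambda>x. g x * f x) at_top F"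
      using filterlim_tendsto_pos_mult_at_top[OF assms(2) 1 assms(1)] .
    then have "eventually (\<lambda>x. B + 1 \<le> g x * f x) F"
      unfolding filterlim_at_top by blast
    then show ?thesis by eventually_elim auto
  next
    case 2
    have "filterlim (\<lambda>x. g x * f x) at_bot F"
      using filterlim_tendsto_neg_mult_at_bot[OF assms(2) 2 assms(1)] .
    then have "eventually (\<lambda>x. g x * f x \<le> -1) F"
      unfolding filterlim_at_bot by blast
    then show ?thesis by eventually_elim auto
  qed
  with bounded have "eventually (\<lambda>x. False) F"
    by eventually_elim (auto simp: mult.commute)
  with assms(3) show False by simp
qed

section \<open>Translations and orbit counting\<close>

context group_action
begin

lemma act_set_subset: "A \<subseteq> carrier G \<Longrightarrow> Y \<subseteq> E \<Longrightarrow> act_set \<phi> A Y \<subseteq> E"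
  unfolding act_set_def using element_image by blast

lemma act_set_translate:
  assumes "g \<in> carrier G" "A \<subseteq> carrier G" "Y \<subseteq> E"
  shows "act_set \<phi> ((\<otimes>) g ` A) Y = \<phi> g ` act_set \<phi> A Y"
proof -
  have comp: "\<phi> (g \<otimes> a) y = \<phi> g (\<phi> a y)" if "a \<in> A" "y \<in> Y" for a y
    using composition_rule assms that by blast
  show ?thesis
  proof (intro equalityI subsetI)
    fix z assume "z \<in> act_set \<phi> ((\<otimes>) g ` A) Y"
    then obtain a y where "a \<in> A" "y \<in> Y" "z = \<phi> (g \<otimes> a) y"
      unfolding act_set_def by blast
    then show "z \<in> \<phi> g ` act_set \<phi> A Y"
      using comp unfolding act_set_def by blast
  next
    fix z assume "z \<in> \<phi> g ` act_set \<phi> A Y"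
    then obtain a y where "a \<in> A" "y \<in> Y" "z = \<phi> g (\<phi> a y)"
      unfolding act_set_def by blast
    then have "z = \<phi> (g \<otimes> a) y" "g \<otimes> a \<in> (\<otimes>) g ` A"
      using comp by auto
    then show "z \<in> act_set \<phi> ((\<otimes>) g ` A) Y"
      using \<open>y \<in> Y\<close> unfolding act_set_def by blast
  qed
qed

lemma card_translate:
  assumes "g \<in> carrier G" "A \<subseteq> carrier G"
  shows "card ((\<otimes>) g ` A) = card A"
proof -
  interpret group G using group_hom group_hom.axioms(1) by blast
  show ?thesis
    using inj_on_subset[OF inj_on_cmult[OF assms(1)] assms(2)] by (rule card_image)
qed

lemma cY_translate:
  assumes "g \<in> carrier G" "A \<subseteq> carrier G" "Y \<subseteq> E"
  shows "cY \<phi> Y l ((\<otimes>) g ` A) = cY \<phi> Y l A"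
proof -
  have "card (\<phi> g ` act_set \<phi> A Y) = card (act_set \<phi> A Y)"
    using inj_on_subset[OF inj_prop[OF assms(1)] act_set_subset[OF assms(2,3)]] by (rule card_image)
  then show ?thesis
    unfolding cY_def act_set_translate[OF assms] card_translate[OF assms(1,2)] by simp
qed

lemma orbit_subset: "orbit G \<phi> y \<subseteq> E" if "y \<in> E"
  unfolding orbit_def using element_image that by blast

lemma orbit_eq_if_mem:
  assumes y: "y \<in> E" and z: "z \<in> orbit G \<phi> y"
  shows "orbit G \<phi> z = orbit G \<phi> y"
proof -
  have zE: "z \<in> E"
    using orbit_subset[OF y] z by blast
  have y_z: "y \<in> orbit G \<phi> z"
    by (rule orbit_sym[OF y zE z])
  show ?thesis
  proof (intro equalityI subsetI)
    fix w assume "w \<in> orbit G \<phi> z"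
    with orbit_subset[OF zE] show "w \<in> orbit G \<phi> y"
      using orbit_trans[OF y zE _ z] by blast
  next
    fix w assume "w \<in> orbit G \<phi> y"
    with orbit_subset[OF y] show "w \<in> orbit G \<phi> z"
      using orbit_trans[OF zE y _ y_z] by blast
  qed
qed

lemma pairwise_disjnt_orbits: "pairwise disjnt (orbits G E \<phi>)"
  unfolding pairwise_def disjnt_def using disjoint_union by blast

text \<open>Each orbit \<open>q\<close> meeting \<open>Y\<close> is counted once, through its \<open>|q \<inter> Y|\<close> points in \<open>Y\<close>.\<close>
lemma card_act_set_carrier:
  assumes "finite (carrier G)" "finite Y" "Y \<subseteq> E"
  shows "real (card (act_set \<phi> (carrier G) Y)) =
    (\<Sum>y\<in>Y. real (card (orbit G \<phi> y)) / real (card (orbit G \<phi> y \<inter> Y)))"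
proof -
  let ?O = "orbit G \<phi> ` Y"
  have same_orbit: "orbit G \<phi> z = orbit G \<phi> y" if "y \<in> Y" "z \<in> orbit G \<phi> y" for y z
    using that assms(3) by (intro orbit_eq_if_mem) auto
  have in_own_orbit: "y \<in> orbit G \<phi> y" if "y \<in> Y" for y
    using that assms(3) orbit_refl by blast
  have finite_orbit: "finite (orbit G \<phi> y)" for y
    using assms(1) by (simp add: orbit_def setcompr_eq_image)
  have "pairwise disjnt ?O"
    using pairwise_subset[OF pairwise_disjnt_orbits] assms(3) unfolding orbits_def by blast
  moreover have "act_set \<phi> (carrier G) Y = \<Union> ?O"
    unfolding act_set_def orbit_def by blast
  ultimately have "card (act_set \<phi> (carrier G) Y) = (\<Sum>q\<in>?O. card q)"
    using card_Union_disjoint[of ?O] finite_orbit by auto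
  then have "real (card (act_set \<phi> (carrier G) Y)) = (\<Sum>q\<in>?O. real (card q))"
    by simp
  moreover have "(\<Sum>y\<in>{z \<in> Y. orbit G \<phi> z = q}. real (card q) / real (card (q \<inter> Y))) = real (card q)"
    if q: "q \<in> ?O" for q
  proof -
    obtain y where y: "y \<in> Y" "q = orbit G \<phi> y"
      using q by blast
    have fibre: "{z \<in> Y. orbit G \<phi> z = q} = q \<inter> Y"
    proof (intro equalityI subsetI)
      fix z assume "z \<in> {z \<in> Y. orbit G \<phi> z = q}"
      then show "z \<in> q \<inter> Y"
        using in_own_orbit by force
    next
      fix z assume "z \<in> q \<inter> Y"
      then show "z \<in> {z \<in> Y. orbit G \<phi> z = q}"
        using same_orbit[OF y(1)] y(2) by simp
    qed
    have "card (q \<inter> Y) \<noteq> 0"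
      using y in_own_orbit assms(2) by auto
    then show ?thesis
      unfolding fibre by simp
  qed
  moreover have "(\<Sum>y\<in>Y. real (card (orbit G \<phi> y)) / real (card (orbit G \<phi> y \<inter> Y)))
      = (\<Sum>q\<in>?O. \<Sum>y\<in>{z \<in> Y. orbit G \<phi> z = q}. real (card q) / real (card (q \<inter> Y)))"
    unfolding sum.image_gen[OF assms(2), of _ "orbit G \<phi>"] by (intro sum.cong refl) simp
  ultimately show ?thesis
    by simp
qed

end

section \<open>Minimizing subgroups\<close>

locale finite_set_action = group_action G X \<phi>
  for G :: "('a, 'c) monoid_scheme" (structure) and X :: "'b set" and \<phi> +
  fixes Y :: "'b set"
  assumes finite_Y: "finite Y" and Y_subset: "Y \<subseteq> X"
begin

sublocale group G
  using group_hom group_hom.axioms(1) by blast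

abbreviation \<mu> :: real where "\<mu> \<equiv> mu_ratio G \<phi> Y"

abbreviation c :: "real \<Rightarrow> 'a set \<Rightarrow> real" where "c \<equiv> cY \<phi> Y"

definition Pfin :: "'a set set" where
  "Pfin = {A. A \<subseteq> carrier G \<and> finite A \<and> A \<noteq> {}}"

lemma singleton_one_in_Pfin: "{\<one>} \<in> Pfin"
  unfolding Pfin_def by simp

lemma act_one: "y \<in> X \<Longrightarrow> \<phi> \<one> y = y"
  by (metis id_eq_one restrict_apply')

lemma mu_ratio_mult_card_le:
  assumes "A \<in> Pfin"
  shows "\<mu> * real (card A) \<le> real (card (act_set \<phi> A Y))"
proof -
  have "\<mu> \<le> real (card (act_set \<phi> A Y)) / real (card A)"
    unfolding mu_ratio_def using assms unfolding Pfin_def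
    by (intro cINF_lower bdd_belowI[of _ 0]) auto
  moreover have "0 < real (card A)"
    using assms unfolding Pfin_def by (simp add: card_gt_0_iff)
  ultimately show ?thesis
    by (simp add: pos_le_divide_eq)
qed

lemma mu_ratio_nonneg: "0 \<le> \<mu>"
  unfolding mu_ratio_def using singleton_one_in_Pfin unfolding Pfin_def
  by (intro cINF_greatest) auto

lemma cY_lower_bound: "A \<in> Pfin \<Longrightarrow> (\<mu> - l) * real (card A) \<le> c l A"
  using mu_ratio_mult_card_le unfolding cY_def by (simp add: left_diff_distrib)

lemma cY_singleton_one_le: "c l {\<one>} \<le> real (card Y) - l"
  using card_act_set_le[of "{\<one>}" Y \<phi>] finite_Y unfolding cY_def by simp

lemma cY_subgroup_ge:
  assumes "subgroup H G" "finite H"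
  shows "real (card Y) - l * real (card H) \<le> c l H"
proof -
  have "Y \<subseteq> act_set \<phi> H Y"
    unfolding act_set_def using subgroup.one_closed[OF assms(1)] act_one Y_subset by force
  then have "card Y \<le> card (act_set \<phi> H Y)"
    using finite_act_set[OF assms(2) finite_Y] by (rule card_mono[rotated])
  then show ?thesis
    unfolding cY_def by simp
qed

definition minimizer :: "real \<Rightarrow> 'a set \<Rightarrow> bool" where
  "minimizer l A \<longleftrightarrow> A \<in> Pfin \<and> (\<forall>B\<in>Pfin. c l A \<le> c l B)"

definition max_minimizer :: "real \<Rightarrow> 'a set \<Rightarrow> bool" where
  "max_minimizer l A \<longleftrightarrow> minimizer l A \<and> (\<forall>B. minimizer l B \<longrightarrow> card B \<le> card A)"

lemma card_le_if_cY_le: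
  assumes "l < \<mu>" "A \<in> Pfin" "c l A \<le> real (card Y)"
  shows "card A \<le> nat \<lfloor>real (card Y) / (\<mu> - l)\<rfloor>"
proof (rule le_nat_floor)
  have "(\<mu> - l) * real (card A) \<le> real (card Y)"
    using cY_lower_bound[OF assms(2), of l] assms(3) by linarith
  then show "real (card A) \<le> real (card Y) / (\<mu> - l)"
    using assms(1) by (simp add: pos_le_divide_eq mult.commute)
qed

lemma finite_cY_image_card_le: "finite (c l ` {A \<in> Pfin. card A \<le> N})"
proof (rule finite_subset)
  show "c l ` {A \<in> Pfin. card A \<le> N} \<subseteq> (\<lambda>(m, n). real m - l * real n) ` ({..N * card Y} \<times> {..N})"
  proof
    fix v assume "v \<in> c l ` {A \<in> Pfin. card A \<le> N}"
    then obtain A where A: "A \<in> Pfin" "card A \<le> N" "v = c l A"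
      by blast
    have "card (act_set \<phi> A Y) \<le> card A * card Y"
      using card_act_set_le finite_Y A(1) unfolding Pfin_def by blast
    also have "\<dots> \<le> N * card Y"
      using A(2) by simp
    finally show "v \<in> (\<lambda>(m, n). real m - l * real n) ` ({..N * card Y} \<times> {..N})"
      using A(2) unfolding A(3) cY_def
      by (intro image_eqI[where x = "(card (act_set \<phi> A Y), card A)"]) auto
  qed
qed simp

text \<open>For \<open>l < \<mu>\<close> only sets of bounded size compete, and on them \<open>c l\<close> takes finitely many values.\<close>
lemma ex_minimizer:
  assumes "0 \<le> l" "l < \<mu>"
  obtains A where "minimizer l A"
proof -
  define N where "N = nat \<lfloor>real (card Y) / (\<mu> - l)\<rfloor>"
  define Q where "Q = {A \<in> Pfin. c l A \<le> real (card Y)}"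
  have "Q \<subseteq> {A \<in> Pfin. card A \<le> N}"
    unfolding Q_def N_def using card_le_if_cY_le assms(2) by blast
  then have fin: "finite (c l ` Q)"
    using finite_cY_image_card_le by (rule finite_subset[OF image_mono])
  have "{\<one>} \<in> Q"
    unfolding Q_def using singleton_one_in_Pfin cY_singleton_one_le[of l] assms(1) by auto
  then have "c l ` Q \<noteq> {}"
    by blast
  from Min_in[OF fin this] obtain A where A: "Min (c l ` Q) = c l A" "A \<in> Q"
    by (rule imageE)
  have "minimizer l A"
    unfolding minimizer_def
  proof (intro conjI ballI)
    show "A \<in> Pfin"
      using A unfolding Q_def by blast
    fix B assume "B \<in> Pfin"
    show "c l A \<le> c l B"
    proof (cases "B \<in> Q")
      case True
      then show ?thesis
        using Min_le[OF fin] A(1) by (metis imageI)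
    next
      case False
      with \<open>B \<in> Pfin\<close> have "real (card Y) < c l B"
        unfolding Q_def by auto
      moreover have "c l A \<le> real (card Y)"
        using A unfolding Q_def by blast
      ultimately show ?thesis
        by linarith
    qed
  qed
  then show thesis
    by (rule that)
qed

lemma ex_max_minimizer:
  assumes "0 \<le> l" "l < \<mu>"
  obtains H where "max_minimizer l H"
proof -
  obtain A where "minimizer l A"
    using ex_minimizer assms by blast
  moreover have "card B < Suc (nat \<lfloor>real (card Y) / (\<mu> - l)\<rfloor>)" if B: "minimizer l B" for B
  proof -
    have "c l B \<le> c l {\<one>}"
      using B singleton_one_in_Pfin unfolding minimizer_def by blast
    also have "\<dots> \<le> real (card Y)"
      using cY_singleton_one_le[of l] assms(1) by linarith
    finally show ?thesis
      using card_le_if_cY_le assms(2) B unfolding minimizer_def by (simp add: less_Suc_eq_le)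
  qed
  ultimately obtain H where "minimizer l H" "\<forall>B. minimizer l B \<longrightarrow> card B \<le> card H"
    using ex_has_greatest_nat[of "minimizer l" A card] by blast
  then show thesis
    using that unfolding max_minimizer_def by blast
qed

lemma max_minimizer_translate:
  assumes H: "max_minimizer l H" and g: "g \<in> carrier G"
  shows "max_minimizer l ((\<otimes>) g ` H)"
proof -
  have HG: "H \<subseteq> carrier G" and "finite H" "H \<noteq> {}"
    using H unfolding max_minimizer_def minimizer_def Pfin_def by auto
  then have "(\<otimes>) g ` H \<in> Pfin"
    using g unfolding Pfin_def by auto
  moreover have "c l ((\<otimes>) g ` H) = c l H"
    by (rule cY_translate[OF g HG Y_subset])
  moreover have "card ((\<otimes>) g ` H) = card H"
    by (rule card_translate[OF g HG])
  ultimately show ?thesis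
    using H unfolding max_minimizer_def minimizer_def by simp
qed

lemma max_minimizer_absorbs:
  assumes H: "max_minimizer l H" and A: "A \<in> Pfin" and le: "c l (H \<union> A) \<le> c l H"
  shows "A \<subseteq> H"
proof -
  have HA: "H \<union> A \<in> Pfin"
    using H A unfolding max_minimizer_def minimizer_def Pfin_def by auto
  with H le have "minimizer l (H \<union> A)"
    unfolding max_minimizer_def minimizer_def by force
  then have "card (H \<union> A) \<le> card H"
    using H unfolding max_minimizer_def by blast
  with HA show ?thesis
    using card_seteq[of "H \<union> A" H] unfolding Pfin_def by blast
qed

lemma max_minimizer_absorbs_overlapping:
  assumes H: "max_minimizer l H" and A: "A \<in> Pfin" and "H \<inter> A \<noteq> {}"
    and le: "c l A \<le> c l (H \<inter> A)"
  shows "A \<subseteq> H"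
proof (rule max_minimizer_absorbs[OF H A])
  have "finite H" "finite A"
    using H A unfolding max_minimizer_def minimizer_def Pfin_def by auto
  then have "c l (H \<union> A) + c l (H \<inter> A) \<le> c l H + c l A"
    using cY_Un_Int_le finite_Y by blast
  with le show "c l (H \<union> A) \<le> c l H"
    by linarith
qed

lemma max_minimizer_subgroup:
  assumes H: "max_minimizer l H" and one: "\<one> \<in> H"
  shows "subgroup H G"
proof -
  have HP: "H \<in> Pfin"
    using H unfolding max_minimizer_def minimizer_def by blast
  then have Hc: "H \<subseteq> carrier G" "finite H"
    unfolding Pfin_def by auto
  have closed: "(\<otimes>) g ` H \<subseteq> H" if g: "g \<in> H" for g
  proof (rule max_minimizer_absorbs_overlapping[OF H])
    have gc: "g \<in> carrier G"
      using g Hc by blast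
    show gH: "(\<otimes>) g ` H \<in> Pfin"
      using HP gc unfolding Pfin_def by auto
    have "g \<in> (\<otimes>) g ` H"
      using gc one by (intro image_eqI[where x = \<one>]) auto
    then show "H \<inter> (\<otimes>) g ` H \<noteq> {}"
      using g by blast
    then have "H \<inter> (\<otimes>) g ` H \<in> Pfin"
      using HP unfolding Pfin_def by auto
    then show "c l ((\<otimes>) g ` H) \<le> c l (H \<inter> (\<otimes>) g ` H)"
      using H cY_translate[OF gc Hc(1) Y_subset] unfolding max_minimizer_def minimizer_def by simp
  qed
  show ?thesis
  proof (rule subgroupI)
    show "H \<subseteq> carrier G" "H \<noteq> {}"
      using Hc one by auto
  next
    fix a b assume "a \<in> H" "b \<in> H"
    then show "a \<otimes> b \<in> H"
      using closed by blast
  next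
    fix a assume a: "a \<in> H"
    then have ac: "a \<in> carrier G"
      using Hc by blast
    have "(\<otimes>) a ` H = H"
      using endo_inj_surj[OF Hc(2) closed[OF a] inj_on_subset[OF inj_on_cmult[OF ac] Hc(1)]] .
    then obtain h where h: "h \<in> H" "a \<otimes> h = \<one>"
      using one by (metis imageE)
    then have "h = inv a"
      using inv_solve_left[of h a \<one>] ac Hc by auto
    with h show "inv a \<in> H"
      by simp
  qed
qed

lemma max_minimizer_stabilizer:
  assumes H: "max_minimizer l H" and "0 \<le> l" and one: "\<one> \<in> H"
  shows "set_stabilizer G \<phi> Y \<subseteq> H"
proof
  fix s assume "s \<in> set_stabilizer G \<phi> Y"
  then have sc: "s \<in> carrier G" and sY: "\<phi> s ` Y = Y"
    unfolding set_stabilizer_def by auto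
  have HP: "H \<in> Pfin"
    using H unfolding max_minimizer_def minimizer_def by blast
  then have Hc: "H \<subseteq> carrier G" "finite H"
    unfolding Pfin_def by auto
  let ?Hs = "(\<lambda>h. h \<otimes> s) ` H"
  have "act_set \<phi> ?Hs Y \<subseteq> act_set \<phi> H Y"
  proof
    fix z assume "z \<in> act_set \<phi> ?Hs Y"
    then obtain h y where hy: "h \<in> H" "y \<in> Y" "z = \<phi> (h \<otimes> s) y"
      unfolding act_set_def by blast
    then have "z = \<phi> h (\<phi> s y)"
      using composition_rule Y_subset Hc(1) sc by blast
    moreover have "\<phi> s y \<in> Y"
      using sY hy(2) by blast
    ultimately show "z \<in> act_set \<phi> H Y"
      using hy(1) unfolding act_set_def by blast
  qed
  then have same: "act_set \<phi> (H \<union> ?Hs) Y = act_set \<phi> H Y"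
    by (auto simp: act_set_Un)
  have "card H \<le> card (H \<union> ?Hs)"
    using Hc by (intro card_mono) auto
  then have "c l (H \<union> ?Hs) \<le> c l H"
    unfolding cY_def same using \<open>0 \<le> l\<close> by (simp add: mult_left_mono)
  moreover have "?Hs \<in> Pfin"
    using HP sc unfolding Pfin_def by auto
  ultimately have "?Hs \<subseteq> H"
    using max_minimizer_absorbs[OF H] by blast
  moreover have "s \<in> ?Hs"
    using one sc by (intro image_eqI[where x = \<one>]) auto
  ultimately show "s \<in> H"
    by blast
qed

lemma minimizer_subset_max_minimizer:
  assumes A: "minimizer l A" and H: "max_minimizer l' H" and "l \<le> l'" and "H \<inter> A \<noteq> {}"
  shows "A \<subseteq> H"
proof (rule max_minimizer_absorbs_overlapping[OF H _ \<open>H \<inter> A \<noteq> {}\<close>])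
  show AP: "A \<in> Pfin"
    using A unfolding minimizer_def by blast
  then have "H \<inter> A \<in> Pfin"
    using \<open>H \<inter> A \<noteq> {}\<close> unfolding Pfin_def by auto
  then have "c l A \<le> c l (H \<inter> A)"
    using A unfolding minimizer_def by blast
  moreover have "(l' - l) * real (card (H \<inter> A)) \<le> (l' - l) * real (card A)"
    using AP \<open>l \<le> l'\<close> unfolding Pfin_def by (intro mult_left_mono) (auto intro: card_mono)
  ultimately show "c l' A \<le> c l' (H \<inter> A)"
    using cY_shift[of \<phi> Y l' A l] cY_shift[of \<phi> Y l' "H \<inter> A" l] by linarith
qed

text \<open>Meaningful only for \<open>0 \<le> l < \<mu>\<close>, where such subgroups exist.\<close>
definition minimizing_subgroup :: "real \<Rightarrow> 'a set" where
  "minimizing_subgroup l =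
    (SOME H. subgroup H G \<and> set_stabilizer G \<phi> Y \<subseteq> H \<and> max_minimizer l H)"

lemma ex_max_minimizer_subgroup:
  assumes "0 \<le> l" "l < \<mu>"
  shows "\<exists>H. subgroup H G \<and> set_stabilizer G \<phi> Y \<subseteq> H \<and> max_minimizer l H"
proof -
  obtain A where A: "max_minimizer l A"
    using ex_max_minimizer assms by blast
  then obtain a where a: "a \<in> A" "a \<in> carrier G"
    unfolding max_minimizer_def minimizer_def Pfin_def by blast
  define H where "H = (\<otimes>) (inv a) ` A"
  have H: "max_minimizer l H"
    unfolding H_def using max_minimizer_translate A a by simp
  have one: "\<one> \<in> H"
    unfolding H_def using a by (intro image_eqI[where x = a]) auto
  show ?thesis
    using max_minimizer_subgroup[OF H one] max_minimizer_stabilizer[OF H assms(1) one] H by blast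
qed

lemma
  assumes "0 \<le> l" "l < \<mu>"
  shows minimizing_subgroup_subgroup: "subgroup (minimizing_subgroup l) G"
    and minimizing_subgroup_stabilizer: "set_stabilizer G \<phi> Y \<subseteq> minimizing_subgroup l"
    and max_minimizer_minimizing_subgroup: "max_minimizer l (minimizing_subgroup l)"
  using someI_ex[OF ex_max_minimizer_subgroup[OF assms]] unfolding minimizing_subgroup_def by blast+

lemma minimizing_subgroup_in_Pfin: "0 \<le> l \<Longrightarrow> l < \<mu> \<Longrightarrow> minimizing_subgroup l \<in> Pfin"
  using max_minimizer_minimizing_subgroup unfolding max_minimizer_def minimizer_def by blast

lemma finite_minimizing_subgroup: "0 \<le> l \<Longrightarrow> l < \<mu> \<Longrightarrow> finite (minimizing_subgroup l)"
  using minimizing_subgroup_in_Pfin unfolding Pfin_def by blast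

lemma card_minimizing_subgroup_pos: "0 \<le> l \<Longrightarrow> l < \<mu> \<Longrightarrow> 0 < card (minimizing_subgroup l)"
  using minimizing_subgroup_in_Pfin unfolding Pfin_def by (simp add: card_gt_0_iff)

lemma cY_minimizing_subgroup_le:
  assumes "0 \<le> l" "l < \<mu>" "A \<in> Pfin"
  shows "c l (minimizing_subgroup l) \<le> c l A"
  using max_minimizer_minimizing_subgroup[OF assms(1,2)] assms(3)
  unfolding max_minimizer_def minimizer_def by blast

lemma minimizing_subgroup_mono:
  assumes "0 \<le> l" "l \<le> l'" "l' < \<mu>"
  shows "minimizing_subgroup l \<subseteq> minimizing_subgroup l'"
proof (rule minimizer_subset_max_minimizer)
  have "0 \<le> l'" "l < \<mu>"
    using assms by linarith+
  then show "minimizer l (minimizing_subgroup l)" "max_minimizer l' (minimizing_subgroup l')"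
    using max_minimizer_minimizing_subgroup assms(1,3) unfolding max_minimizer_def by blast+
  have "\<one> \<in> minimizing_subgroup l" "\<one> \<in> minimizing_subgroup l'"
    using minimizing_subgroup_subgroup[THEN subgroup.one_closed] assms(1,3) \<open>0 \<le> l'\<close> \<open>l < \<mu>\<close>
    by blast+
  then show "minimizing_subgroup l' \<inter> minimizing_subgroup l \<noteq> {}"
    by blast
qed (rule assms(2))

section \<open>The limit \<open>\<lambda> \<rightarrow> \<mu>\<close>\<close>

abbreviation orbit_in :: "'a set \<Rightarrow> 'b \<Rightarrow> 'b set" where
  "orbit_in H y \<equiv> orbit (G\<lparr>carrier := H\<rparr>) \<phi> y"

abbreviation stabilizer_in :: "'a set \<Rightarrow> 'b \<Rightarrow> 'a set" where
  "stabilizer_in H y \<equiv> stabilizer (G\<lparr>carrier := H\<rparr>) \<phi> y"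

lemma orbit_in_eq: "orbit_in H y = (\<lambda>h. \<phi> h y) ` H"
  unfolding orbit_def by auto

lemma stabilizer_in_eq: "stabilizer_in H y = {h \<in> H. \<phi> h y = y}"
  unfolding stabilizer_def by simp

lemma card_orbit_in_mono: "H \<subseteq> H' \<Longrightarrow> finite H' \<Longrightarrow> card (orbit_in H y) \<le> card (orbit_in H' y)"
  unfolding orbit_in_eq by (intro card_mono image_mono) auto

lemma card_orbit_in_Int_mono: "H \<subseteq> H' \<Longrightarrow> card (orbit_in H y \<inter> Y) \<le> card (orbit_in H' y \<inter> Y)"
  using finite_Y unfolding orbit_in_eq by (intro card_mono) auto

lemma card_stabilizer_in_mono:
  "H \<subseteq> H' \<Longrightarrow> finite H' \<Longrightarrow> card (stabilizer_in H y) \<le> card (stabilizer_in H' y)"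
  unfolding stabilizer_in_eq by (intro card_mono) auto

lemma card_orbit_in_eq_div:
  assumes "subgroup H G" "finite H" "y \<in> X"
  shows "real (card (orbit_in H y)) = real (card H) / real (card (stabilizer_in H y))"
proof -
  interpret H: group_action "G\<lparr>carrier := H\<rparr>" X \<phi>
    by (rule induced_action[OF assms(1)])
  have "\<one> \<in> stabilizer_in H y"
    unfolding stabilizer_in_eq using subgroup.one_closed[OF assms(1)] act_one[OF assms(3)] by simp
  moreover have "finite (stabilizer_in H y)"
    unfolding stabilizer_in_eq using assms(2) by simp
  ultimately have "card (stabilizer_in H y) \<noteq> 0"
    by auto
  moreover have "card (orbit_in H y) * card (stabilizer_in H y) = card H"
    using H.orbit_stabilizer_theorem[OF assms(3)] by (simp add: order_def)
  ultimately show ?thesis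
    by (simp add: eq_divide_eq flip: of_nat_mult)
qed

lemma card_orbit_in_div_card:
  assumes "subgroup H G" "finite H" "y \<in> X"
  shows "real (card (orbit_in H y)) / real (card H) = inverse (real (card (stabilizer_in H y)))"
proof -
  have "card H \<noteq> 0"
    using assms(2) subgroup.one_closed[OF assms(1)] by auto
  then show ?thesis
    using card_orbit_in_eq_div[OF assms] by (simp add: divide_inverse)
qed

text \<open>Orbit counting (\<open>card_act_set_carrier\<close>) and the orbit-stabilizer theorem: each point \<open>y\<close>
  contributes \<open>|H| / (|H\<^sub>y| |Hy \<inter> Y|)\<close> to \<open>|HY|\<close>.\<close>
lemma cY_subgroup_split:
  assumes "subgroup H G" "finite H" "T \<subseteq> Y"
  shows "c l H = real (card H) *
      ((\<Sum>y\<in>T. 1 / real (card (stabilizer_in H y) * card (orbit_in H y \<inter> Y))) - l)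
    + (\<Sum>y\<in>Y - T. real (card (orbit_in H y)) / real (card (orbit_in H y \<inter> Y)))"
proof -
  interpret H: group_action "G\<lparr>carrier := H\<rparr>" X \<phi>
    by (rule induced_action[OF assms(1)])
  let ?f = "\<lambda>y. real (card (orbit_in H y)) / real (card (orbit_in H y \<inter> Y))"
  have "c l H = sum ?f Y - l * real (card H)"
    using H.card_act_set_carrier[OF _ finite_Y Y_subset] assms(2) unfolding cY_def by simp
  also have "sum ?f Y = sum ?f T + sum ?f (Y - T)"
    using sum.subset_diff[OF assms(3) finite_Y, of ?f] by linarith
  also have "sum ?f T = real (card H) * (\<Sum>y\<in>T. 1 / real (card (stabilizer_in H y) * card (orbit_in H y \<inter> Y)))"
    unfolding sum_distrib_left
    by (intro sum.cong refl) (use assms Y_subset card_orbit_in_eq_div in auto)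
  finally show ?thesis
    by (simp add: algebra_simps)
qed

lemma card_orbit_in_Int_eventually_const:
  assumes "0 < \<mu>"
  obtains p where
    "\<And>y. eventually (\<lambda>l. card (orbit_in (minimizing_subgroup l) y \<inter> Y) = p y) (at_left \<mu>)"
proof -
  have "\<exists>v. eventually (\<lambda>l. card (orbit_in (minimizing_subgroup l) y \<inter> Y) = v) (at_left \<mu>)" for y
  proof -
    let ?p = "\<lambda>l. card (orbit_in (minimizing_subgroup l) y \<inter> Y)"
    have "(\<exists>v. eventually (\<lambda>l. ?p l = v) (at_left \<mu>)) \<or> filterlim ?p at_top (at_left \<mu>)"
      using assms by (rule mono_nat_eventually_const_or_at_top)
        (intro card_orbit_in_Int_mono minimizing_subgroup_mono)
    moreover have "\<not> filterlim ?p at_top (at_left \<mu>)"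
    proof
      assume "filterlim ?p at_top (at_left \<mu>)"
      then have "eventually (\<lambda>l. Suc (card Y) \<le> ?p l) (at_left \<mu>)"
        unfolding filterlim_at_top by blast
      moreover have "?p l \<le> card Y" for l
        using finite_Y by (intro card_mono) auto
      ultimately have "eventually (\<lambda>l. False) (at_left \<mu>)"
        using eventually_mono not_less_eq_eq by blast
      then show False
        by simp
    qed
    ultimately show ?thesis
      by blast
  qed
  then have "\<exists>p. \<forall>y. eventually (\<lambda>l. card (orbit_in (minimizing_subgroup l) y \<inter> Y) = p y) (at_left \<mu>)"
    by (rule choice[OF allI])
  with that show thesis
    by blast
qed

lemma card_stabilizer_in_eventually_const_or_at_top:
  assumes "0 < \<mu>"
  shows "(\<exists>v. eventually (\<lambda>l. card (stabilizer_in (minimizing_subgroup l) y) = v) (at_left \<mu>))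
    \<or> filterlim (\<lambda>l. card (stabilizer_in (minimizing_subgroup l) y)) at_top (at_left \<mu>)"
  using assms by (rule mono_nat_eventually_const_or_at_top)
    (intro card_stabilizer_in_mono minimizing_subgroup_mono finite_minimizing_subgroup, auto)

lemma card_orbit_in_div_card_tendsto_zero:
  assumes "0 < \<mu>" "y \<in> X"
    and "filterlim (\<lambda>l. card (stabilizer_in (minimizing_subgroup l) y)) at_top (at_left \<mu>)"
  shows "((\<lambda>l. real (card (orbit_in (minimizing_subgroup l) y)) / real (card (minimizing_subgroup l)))
    \<longlongrightarrow> 0) (at_left \<mu>)"
proof -
  have "((\<lambda>l. inverse (real (card (stabilizer_in (minimizing_subgroup l) y)))) \<longlongrightarrow> 0) (at_left \<mu>)"
    using filterlim_compose[OF filterlim_real_sequentially assms(3)] by (rule tendsto_inverse_0_at_top)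
  moreover have "eventually (\<lambda>l. inverse (real (card (stabilizer_in (minimizing_subgroup l) y)))
      = real (card (orbit_in (minimizing_subgroup l) y)) / real (card (minimizing_subgroup l))) (at_left \<mu>)"
    using eventually_at_left_real[OF assms(1)]
    by eventually_elim (simp add: card_orbit_in_div_card minimizing_subgroup_subgroup
        finite_minimizing_subgroup assms(2))
  ultimately show ?thesis
    by (rule Lim_transform_eventually)
qed

text \<open>Along the chain of minimizing subgroups, \<open>c \<mu>\<close> splits into a part proportional to the size
  of the subgroup, coming from the points whose stabilizers stop growing, and a monotone remainder
  that is negligible relative to that size.\<close>
lemma cY_mu_minimizing_subgroup_decomposition:
  assumes "0 < \<mu>"
  obtains \<delta> R where
    "((\<lambda>l. R l / real (card (minimizing_subgroup l))) \<longlongrightarrow> 0) (at_left \<mu>)"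
    "eventually (\<lambda>l. c \<mu> (minimizing_subgroup l) = real (card (minimizing_subgroup l)) * \<delta> + R l)
      (at_left \<mu>)"
    "\<And>l l'. 0 \<le> l \<Longrightarrow> l \<le> l' \<Longrightarrow> l' < \<mu> \<Longrightarrow> R l \<le> R l'"
proof -
  let ?K = minimizing_subgroup
  let ?s = "\<lambda>l y. card (stabilizer_in (?K l) y)"
  obtain p where p: "\<And>y. eventually (\<lambda>l. card (orbit_in (?K l) y \<inter> Y) = p y) (at_left \<mu>)"
    using card_orbit_in_Int_eventually_const[OF assms] by blast
  define T where "T = {y \<in> Y. \<exists>v. eventually (\<lambda>l. ?s l y = v) (at_left \<mu>)}"
  have "\<forall>y\<in>T. \<exists>v. eventually (\<lambda>l. ?s l y = v) (at_left \<mu>)"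
    unfolding T_def by blast
  then obtain s where s: "\<forall>y\<in>T. eventually (\<lambda>l. ?s l y = s y) (at_left \<mu>)"
    by (metis bchoice)
  have s_at_top: "filterlim (\<lambda>l. ?s l y) at_top (at_left \<mu>)" if "y \<in> Y - T" for y
    using card_stabilizer_in_eventually_const_or_at_top[OF assms, of y] that unfolding T_def by blast
  have T: "T \<subseteq> Y" "finite T"
    unfolding T_def using finite_Y by auto
  have K: "subgroup (?K l) G" "finite (?K l)" if "0 \<le> l" "l < \<mu>" for l
    using minimizing_subgroup_subgroup[OF that] finite_minimizing_subgroup[OF that] by auto
  define \<delta> where "\<delta> = (\<Sum>y\<in>T. 1 / real (s y * p y)) - \<mu>"
  define R where "R l = (\<Sum>y\<in>Y - T. real (card (orbit_in (?K l) y)) / real (p y))" for l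
  show thesis
  proof (rule that)
    have "R l / real (card (?K l))
        = (\<Sum>y\<in>Y - T. real (card (orbit_in (?K l) y)) / real (card (?K l)) / real (p y))" for l
      unfolding R_def sum_divide_distrib by (simp add: field_simps)
    moreover have "((\<lambda>l. \<Sum>y\<in>Y - T. real (card (orbit_in (?K l) y)) / real (card (?K l)) / real (p y))
        \<longlongrightarrow> 0) (at_left \<mu>)"
      using T(1) Y_subset s_at_top
      by (intro tendsto_null_sum tendsto_divide_zero card_orbit_in_div_card_tendsto_zero[OF assms]) auto
    ultimately show "((\<lambda>l. R l / real (card (?K l))) \<longlongrightarrow> 0) (at_left \<mu>)"
      by simp
  next
    have "eventually (\<lambda>l. \<forall>y\<in>Y. card (orbit_in (?K l) y \<inter> Y) = p y) (at_left \<mu>)"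
      by (intro eventually_ball_finite[OF finite_Y] ballI p)
    moreover have "eventually (\<lambda>l. \<forall>y\<in>T. ?s l y = s y) (at_left \<mu>)"
      by (rule eventually_ball_finite[OF T(2) s])
    ultimately show "eventually (\<lambda>l. c \<mu> (?K l) = real (card (?K l)) * \<delta> + R l) (at_left \<mu>)"
      using eventually_at_left_real[OF assms]
    proof eventually_elim
      case (elim l)
      have "(\<Sum>y\<in>T. 1 / real (?s l y * card (orbit_in (?K l) y \<inter> Y))) = (\<Sum>y\<in>T. 1 / real (s y * p y))"
        using elim T(1) by (intro sum.cong refl) auto
      moreover have "(\<Sum>y\<in>Y - T. real (card (orbit_in (?K l) y)) / real (card (orbit_in (?K l) y \<inter> Y)))
          = R l"
        unfolding R_def using elim by (intro sum.cong refl) auto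
      ultimately show ?case
        using cY_subgroup_split[OF K(1,2) T(1), of l \<mu>] elim unfolding \<delta>_def by simp
    qed
  next
    fix l l' :: real assume "0 \<le> l" "l \<le> l'" "l' < \<mu>"
    then have "?K l \<subseteq> ?K l'" "finite (?K l')"
      using minimizing_subgroup_mono finite_minimizing_subgroup by auto
    then show "R l \<le> R l'"
      unfolding R_def by (intro sum_mono divide_right_mono) (simp_all add: card_orbit_in_mono)
  qed
qed

lemma cY_mu_minimizing_subgroup_bounds:
  assumes "0 \<le> l" "l < \<mu>"
  shows "0 \<le> c \<mu> (minimizing_subgroup l)" "c \<mu> (minimizing_subgroup l) \<le> real (card Y)"
proof -
  show "0 \<le> c \<mu> (minimizing_subgroup l)"
    using cY_lower_bound[OF minimizing_subgroup_in_Pfin[OF assms], of \<mu>] by simp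
  have "c \<mu> (minimizing_subgroup l) \<le> c l (minimizing_subgroup l)"
    using assms by (intro cY_antimono) simp
  also have "\<dots> \<le> c l {\<one>}"
    using cY_minimizing_subgroup_le[OF assms singleton_one_in_Pfin] .
  also have "\<dots> \<le> real (card Y)"
    using cY_singleton_one_le[of l] assms by linarith
  finally show "c \<mu> (minimizing_subgroup l) \<le> real (card Y)" .
qed

lemma minimizing_subgroup_eventually_optimal_unbounded:
  assumes "0 < \<mu>" and unbounded: "filterlim (\<lambda>l. card (minimizing_subgroup l)) at_top (at_left \<mu>)"
  obtains l1 where "0 \<le> l1" "l1 < \<mu>"
    "\<And>l. l1 \<le> l \<Longrightarrow> l < \<mu> \<Longrightarrow> c \<mu> (minimizing_subgroup l1) \<le> c \<mu> (minimizing_subgroup l)"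
proof -
  let ?K = minimizing_subgroup
  let ?k = "\<lambda>l. real (card (?K l))"
  obtain \<delta> R where R_negligible: "((\<lambda>l. R l / ?k l) \<longlongrightarrow> 0) (at_left \<mu>)"
    and decomposition: "eventually (\<lambda>l. c \<mu> (?K l) = ?k l * \<delta> + R l) (at_left \<mu>)"
    and R_mono: "\<And>l l'. 0 \<le> l \<Longrightarrow> l \<le> l' \<Longrightarrow> l' < \<mu> \<Longrightarrow> R l \<le> R l'"
    by (rule cY_mu_minimizing_subgroup_decomposition[OF assms(1)]) blast
  have "\<delta> = 0"
  proof (rule bounded_product_at_top_imp_zero)
    show "filterlim ?k at_top (at_left \<mu>)"
      using filterlim_compose[OF filterlim_real_sequentially unbounded] .
    show "((\<lambda>l. \<delta> + R l / ?k l) \<longlongrightarrow> \<delta>) (at_left \<mu>)"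
      using tendsto_add[OF tendsto_const R_negligible] by simp
    show "eventually (\<lambda>l. 0 \<le> ?k l * (\<delta> + R l / ?k l) \<and> ?k l * (\<delta> + R l / ?k l) \<le> real (card Y))
        (at_left \<mu>)"
      using decomposition eventually_at_left_real[OF assms(1)]
    proof eventually_elim
      case (elim l)
      then have l: "0 \<le> l" "l < \<mu>"
        by auto
      then have "?k l * (\<delta> + R l / ?k l) = c \<mu> (?K l)"
        using elim card_minimizing_subgroup_pos[OF l] by (simp add: distrib_left)
      then show ?case
        using cY_mu_minimizing_subgroup_bounds[OF l] by simp
    qed
  qed simp
  with decomposition have "eventually (\<lambda>l. c \<mu> (?K l) = R l) (at_left \<mu>)"
    by simp
  then obtain l1 where l1: "0 \<le> l1" "l1 < \<mu>" and eq: "\<And>l. l1 \<le> l \<Longrightarrow> l < \<mu> \<Longrightarrow> c \<mu> (?K l) = R l"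
    using assms(1) by (rule eventually_at_left_imp_interval) blast
  show thesis
  proof (rule that[OF l1])
    fix l assume "l1 \<le> l" "l < \<mu>"
    then show "c \<mu> (?K l1) \<le> c \<mu> (?K l)"
      using eq[OF order_refl l1(2)] eq R_mono[OF l1(1)] by simp
  qed
qed

lemma minimizing_subgroup_eventually_optimal:
  assumes "0 < \<mu>"
  obtains l1 where "0 \<le> l1" "l1 < \<mu>"
    "\<And>l. l1 \<le> l \<Longrightarrow> l < \<mu> \<Longrightarrow> c \<mu> (minimizing_subgroup l1) \<le> c \<mu> (minimizing_subgroup l)"
proof -
  let ?K = minimizing_subgroup
  let ?k = "\<lambda>l. card (?K l)"
  have "(\<exists>v. eventually (\<lambda>l. ?k l = v) (at_left \<mu>)) \<or> filterlim ?k at_top (at_left \<mu>)"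
  proof (rule mono_nat_eventually_const_or_at_top[OF assms])
    fix l l' :: real assume "0 \<le> l" "l \<le> l'" "l' < \<mu>"
    then have "?K l \<subseteq> ?K l'" "finite (?K l')"
      using minimizing_subgroup_mono finite_minimizing_subgroup by auto
    then show "?k l \<le> ?k l'"
      by (simp add: card_mono)
  qed
  then consider (const) v where "eventually (\<lambda>l. ?k l = v) (at_left \<mu>)"
    | (unbounded) "filterlim ?k at_top (at_left \<mu>)"
    by blast
  then show thesis
  proof cases
    case const
    obtain l1 where l1: "0 \<le> l1" "l1 < \<mu>" and k: "\<And>l. l1 \<le> l \<Longrightarrow> l < \<mu> \<Longrightarrow> ?k l = v"
      by (rule eventually_at_left_imp_interval[OF const assms]) blast
    have same: "?K l1 = ?K l" if "l1 \<le> l" "l < \<mu>" for l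
    proof (rule card_seteq)
      show "finite (?K l)"
        using l1 that by (intro finite_minimizing_subgroup) auto
      show "?K l1 \<subseteq> ?K l"
        using l1 that by (intro minimizing_subgroup_mono)
      show "?k l \<le> ?k l1"
        using k l1 that by simp
    qed
    show thesis
    proof (rule that[OF l1])
      fix l assume "l1 \<le> l" "l < \<mu>"
      then show "c \<mu> (?K l1) \<le> c \<mu> (?K l)"
        by (simp only: same)
    qed
  next
    case unbounded
    with assms show thesis
      using that by (rule minimizing_subgroup_eventually_optimal_unbounded)
  qed
qed

lemma ex_optimal_subgroup_at_mu:
  assumes "0 < \<mu>"
  obtains H where "subgroup H G" "finite H" "set_stabilizer G \<phi> Y \<subseteq> H"
    "\<And>A. A \<in> Pfin \<Longrightarrow> c \<mu> H \<le> c \<mu> A"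
proof -
  let ?K = minimizing_subgroup
  obtain l1 where l1: "0 \<le> l1" "l1 < \<mu>"
    and optimal: "\<And>l. l1 \<le> l \<Longrightarrow> l < \<mu> \<Longrightarrow> c \<mu> (?K l1) \<le> c \<mu> (?K l)"
    using minimizing_subgroup_eventually_optimal[OF assms] by blast
  show thesis
  proof (rule that)
    show "subgroup (?K l1) G" "finite (?K l1)" "set_stabilizer G \<phi> Y \<subseteq> ?K l1"
      using l1 minimizing_subgroup_subgroup finite_minimizing_subgroup minimizing_subgroup_stabilizer
      by auto
    fix A assume A: "A \<in> Pfin"
    have "eventually (\<lambda>l. c \<mu> (?K l1) \<le> c l A) (at_left \<mu>)"
      using eventually_at_left_real[OF l1(2)]
    proof eventually_elim
      case (elim l)
      then have l: "l1 \<le> l" "0 \<le> l" "l < \<mu>"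
        using l1 by auto
      have "c \<mu> (?K l1) \<le> c \<mu> (?K l)"
        using optimal l by blast
      also have "\<dots> \<le> c l (?K l)"
        using l by (intro cY_antimono) simp
      also have "\<dots> \<le> c l A"
        using cY_minimizing_subgroup_le l A by blast
      finally show ?case .
    qed
    moreover have "((\<lambda>l. c l A) \<longlongrightarrow> c \<mu> A) (at_left \<mu>)"
      unfolding cY_def by (intro tendsto_intros)
    ultimately show "c \<mu> (?K l1) \<le> c \<mu> A"
      using tendsto_lowerbound[OF _ _ trivial_limit_at_left_real] by blast
  qed
qed

lemma ex_optimal_subgroup:
  assumes "0 < \<mu>" "0 \<le> l" "l \<le> \<mu>"
  obtains H where "subgroup H G" "finite H" "set_stabilizer G \<phi> Y \<subseteq> H"
    "\<And>A. A \<in> Pfin \<Longrightarrow> c l H \<le> c l A"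
proof (cases "l < \<mu>")
  case True
  with assms(2) show thesis
    by (intro that[of "minimizing_subgroup l"] minimizing_subgroup_subgroup finite_minimizing_subgroup
        minimizing_subgroup_stabilizer cY_minimizing_subgroup_le)
next
  case False
  with assms(3) have "l = \<mu>"
    by simp
  with ex_optimal_subgroup_at_mu[OF assms(1)] show thesis
    using that by blast
qed

end

theorem mainTheorem8:
  fixes G :: "('a, 'c) monoid_scheme" and X :: "'b set" and \<phi> :: "'a \<Rightarrow> 'b \<Rightarrow> 'b" and Y :: "'b set"
  assumes "group_action G X \<phi>"
    and "finite Y" and "Y \<subseteq> X"
  shows "mu_ratio G \<phi> Y = 0 \<or>
    (\<forall>lam::real. 0 \<le> lam \<and> lam \<le> mu_ratio G \<phi> Y \<longrightarrow>
      (\<exists>H. subgroup H G \<and> finite H \<and> set_stabilizer G \<phi> Y \<subseteq> H \<and>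
        (\<forall>A. A \<subseteq> carrier G \<and> finite A \<and> A \<noteq> {} \<longrightarrow>
           cY \<phi> Y lam A \<ge> cY \<phi> Y lam H \<and>
           cY \<phi> Y lam H \<ge> real (card Y) - lam * real (card H))))"
proof -
  interpret finite_set_action G X \<phi> Y
    using assms by (simp add: finite_set_action_def finite_set_action_axioms_def)
  have "\<exists>H. subgroup H G \<and> finite H \<and> set_stabilizer G \<phi> Y \<subseteq> H \<and>
      (\<forall>A. A \<subseteq> carrier G \<and> finite A \<and> A \<noteq> {} \<longrightarrow>
        c lam H \<le> c lam A \<and> real (card Y) - lam * real (card H) \<le> c lam H)"
    if lam: "0 < \<mu>" "0 \<le> lam" "lam \<le> \<mu>" for lam
  proof -
    obtain H where "subgroup H G" "finite H" "set_stabilizer G \<phi> Y \<subseteq> H"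
      and "\<And>A. A \<in> Pfin \<Longrightarrow> c lam H \<le> c lam A"
      by (rule ex_optimal_subgroup[OF lam]) blast
    then show ?thesis
      using cY_subgroup_ge unfolding Pfin_def by blast
  qed
  with mu_ratio_nonneg show ?thesis
    by force
qed

end
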